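(* Let $\alpha$ be an infinite permutation. If for some positive integer $N$, $\alpha$ has an $N$-monotone subpermutation, then $\alpha$ is not equidistributed.
   Context: An infinite permutation is an equivalence class of sequences $(a[n])_{n\ge0}$ of pairwise distinct reals, where two sequences are equivalent if $a[i]<a[j]\iff b[i]<b[j]$ for all $i,j$; write $\alpha=(\alpha[n])_{n\ge0}$ with $\alpha[i]<\alpha[j]$ iff $a[i]<a[j]$ for a representative. A sequence $(a[n])$ in $[0,1]$ is equidistributed if $\lim_{n\to\infty}\frac{\#\{0\le i<n:a[i]<t\}}{n}=t$ for each $t\in[0,1]$; a permutation is equidistributed if it has an equidistributed representative in $[0,1]$. For a strictly increasing sequence of indices $(n_i)_{i\ge1}$, the subpermutation $(\alpha[n_i])$ is $N$-growing (resp. $N$-decreasing) if $n_{i+1}-n_i\le N$ and $\alpha[n_{i+1}]>\alpha[n_i]$ (resp. $<$) for all $i$; it is $N$-monotone if it is $N$-growing or $N$-decreasing. *)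

theory Defs
  imports Complex_Main
begin

text \<open>An infinite permutation is represented by any sequence of pairwise distinct
reals; two sequences represent the same permutation iff they have the same
relative order.\<close>

definition same_order :: "(nat \<Rightarrow> real) \<Rightarrow> (nat \<Rightarrow> real) \<Rightarrow> bool" where
  "same_order a b \<longleftrightarrow> (\<forall>i j. a i < a j \<longleftrightarrow> b i < b j)"

definition equidistributed_seq :: "(nat \<Rightarrow> real) \<Rightarrow> bool" where
  "equidistributed_seq a \<longleftrightarrow> (\<forall>n. a n \<in> {0..1}) \<and>
     (\<forall>t\<in>{0..1}. (\<lambda>n. real (card {i. i < n \<and> a i < t}) / real n) \<longlonglongrightarrow> t)"

definition equidistributed_perm :: "(nat \<Rightarrow> real) \<Rightarrow> bool" where
  "equidistributed_perm a \<longleftrightarrow> (\<exists>b. inj b \<and> same_order a b \<and> equidistributed_seq b)"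

definition N_growing :: "nat \<Rightarrow> (nat \<Rightarrow> real) \<Rightarrow> (nat \<Rightarrow> nat) \<Rightarrow> bool" where
  "N_growing N a n \<longleftrightarrow> strict_mono n \<and>
     (\<forall>i. n (Suc i) - n i \<le> N \<and> a (n i) < a (n (Suc i)))"

definition N_decreasing :: "nat \<Rightarrow> (nat \<Rightarrow> real) \<Rightarrow> (nat \<Rightarrow> nat) \<Rightarrow> bool" where
  "N_decreasing N a n \<longleftrightarrow> strict_mono n \<and>
     (\<forall>i. n (Suc i) - n i \<le> N \<and> a (n i) > a (n (Suc i)))"

definition has_N_monotone_subperm :: "nat \<Rightarrow> (nat \<Rightarrow> real) \<Rightarrow> bool" where
  "has_N_monotone_subperm N a \<longleftrightarrow> (\<exists>n. N_growing N a n \<or> N_decreasing N a n)"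

end

theory Submission
  imports Defs
begin

text \<open>In an equidistributed representative b, the terms of an N-monotone subpermutation
form a strictly monotone sequence in [0,1], so from some index on they lie in a half-open
interval [t1, t2) of length less than 1/N. Since consecutive indices differ by at most N,
this interval then receives about m/N of the first m terms of b, whereas equidistribution
gives it asymptotic frequency t2 - t1 < 1/N.\<close>

lemma bounded_gaps_growth:
  fixes n :: "nat \<Rightarrow> nat"
  assumes "strict_mono n" and "\<And>i. n (Suc i) - n i \<le> N"
  shows "n k \<le> n 0 + k * N"
proof (induction k)
  case (Suc k)
  have "n k < n (Suc k)" using assms(1) by (simp add: strict_mono_Suc_iff)
  then have "n (Suc k) \<le> n k + N" using assms(2)[of k] by linarith
  with Suc show ?case by simp
qed simp

lemma card_ge_div_of_bounded_gaps:
  fixes n :: "nat \<Rightarrow> nat"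
  assumes "strict_mono n" and "\<And>i. n (Suc i) - n i \<le> N" and "N > 0" and "\<And>k. P (n k)"
  shows "(m - n 0) div N \<le> card {i. i < m \<and> P i}"
proof -
  define K where "K = (m - n 0) div N"
  have "n ` {..<K} \<subseteq> {i. i < m \<and> P i}"
  proof
    fix x assume "x \<in> n ` {..<K}"
    then obtain k where "k < K" and x: "x = n k" by auto
    then have "k * N < K * N" using \<open>N > 0\<close> by simp
    also have "K * N \<le> m - n 0" unfolding K_def by simp
    finally have "n 0 + k * N < m" by linarith
    then have "n k < m" using bounded_gaps_growth[of n N k, OF assms(1,2)] by linarith
    then show "x \<in> {i. i < m \<and> P i}" using x assms(4) by simp
  qed
  moreover have "card (n ` {..<K}) = K"
    using card_image[OF strict_mono_imp_inj_on[OF assms(1)]] by simp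
  ultimately show ?thesis unfolding K_def by (metis card_mono finite_Collect_conjI finite_Collect_less_nat)
qed

lemma density_ge_inverse_gap:
  fixes n :: "nat \<Rightarrow> nat"
  assumes "strict_mono n" and "\<And>i. n (Suc i) - n i \<le> N" and "N > 0" and "\<And>k. P (n k)"
    and "(\<lambda>m. real (card {i. i < m \<and> P i}) / real m) \<longlonglongrightarrow> d"
  shows "1 / real N \<le> d"
proof -
  define C where "C = real (n 0) / real N + 1"
  have lower: "1 / real N - C / real m \<le> real (card {i. i < m \<and> P i}) / real m"
    if "m \<ge> 1" for m
  proof -
    have "real (m - n 0) = real ((m - n 0) div N) * real N + real ((m - n 0) mod N)"
      by (metis of_nat_add of_nat_mult div_mult_mod_eq)
    moreover have "real ((m - n 0) mod N) < real N" using \<open>N > 0\<close> by simp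
    moreover have "real m - real (n 0) \<le> real (m - n 0)" by simp
    ultimately have "real m - real (n 0) < (real ((m - n 0) div N) + 1) * real N"
      by (simp add: algebra_simps)
    then have "real m / real N - C < real ((m - n 0) div N)"
      using \<open>N > 0\<close> unfolding C_def by (simp add: field_simps)
    also have "\<dots> \<le> real (card {i. i < m \<and> P i})"
      using card_ge_div_of_bounded_gaps[of n N P m, OF assms(1-4)] by simp
    finally have "(real m / real N - C) / real m \<le> real (card {i. i < m \<and> P i}) / real m"
      using that by (simp add: divide_right_mono)
    then show ?thesis using that by (simp add: field_simps)
  qed
  have "(\<lambda>m. 1 / real N - C / real m) \<longlonglongrightarrow> 1 / real N - 0"
    by (intro tendsto_diff tendsto_const lim_const_over_n)
  then have "1 / real N - 0 \<le> d"
    by (rule LIMSEQ_le[OF _ assms(5)]) (use lower in \<open>auto intro: exI[of _ 1]\<close>)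
  then show ?thesis by simp
qed

lemma equidistributed_interval_frequency:
  assumes "equidistributed_seq b" and "0 \<le> t1" "t1 \<le> t2" "t2 \<le> 1"
  shows "(\<lambda>m. real (card {i. i < m \<and> t1 \<le> b i \<and> b i < t2}) / real m) \<longlonglongrightarrow> t2 - t1"
proof -
  let ?F = "\<lambda>t m. real (card {i. i < m \<and> b i < t}) / real m"
  have "card {i. i < m \<and> b i < t2} = card {i. i < m \<and> b i < t1} + card {i. i < m \<and> t1 \<le> b i \<and> b i < t2}"
    for m
  proof -
    have "{i. i < m \<and> b i < t2} = {i. i < m \<and> b i < t1} \<union> {i. i < m \<and> t1 \<le> b i \<and> b i < t2}"
      using \<open>t1 \<le> t2\<close> by auto
    then show ?thesis by (simp add: card_Un_disjoint disjoint_iff)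
  qed
  then have "real (card {i. i < m \<and> t1 \<le> b i \<and> b i < t2}) / real m = ?F t2 m - ?F t1 m" for m
    by (simp add: add_divide_distrib)
  moreover have "(\<lambda>m. ?F t2 m - ?F t1 m) \<longlonglongrightarrow> t2 - t1"
    using assms unfolding equidistributed_seq_def by (intro tendsto_diff) auto
  ultimately show ?thesis by simp
qed

lemma strictly_monotone_eventually_in_short_interval:
  fixes f :: "nat \<Rightarrow> real"
  assumes range: "\<And>i. f i \<in> {0..1}" and "(\<forall>i. f i < f (Suc i)) \<or> (\<forall>i. f (Suc i) < f i)"
    and "e > 0"
  obtains t1 t2 i0 where "0 \<le> t1" "t1 \<le> t2" "t2 \<le> 1" "t2 - t1 < e"
    and "\<And>i. i \<ge> i0 \<Longrightarrow> t1 \<le> f i \<and> f i < t2"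
proof (cases "\<forall>i. f i < f (Suc i)")
  case True
  then have "incseq f" by (simp add: incseq_SucI less_imp_le)
  then obtain L where lim: "f \<longlonglongrightarrow> L" and "\<forall>i. f i \<le> L"
    using incseq_convergent[of f 1] range by auto
  then have below: "f i < L" for i using True less_le_trans by blast
  have "L \<le> 1" using LIMSEQ_le_const2[OF lim] range by auto
  obtain i0 where close: "\<forall>i\<ge>i0. norm (f i - L) < e / 2"
    using LIMSEQ_D[OF lim, of "e / 2"] \<open>e > 0\<close> by auto
  show ?thesis
  proof (rule that[of "max 0 (L - e / 2)" L i0])
    show "0 \<le> max 0 (L - e / 2)" "L \<le> 1" "L - max 0 (L - e / 2) < e"
      using \<open>L \<le> 1\<close> \<open>e > 0\<close> by auto
    show "max 0 (L - e / 2) \<le> L" using below[of 0] range[of 0] \<open>e > 0\<close> by auto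
    show "max 0 (L - e / 2) \<le> f i \<and> f i < L" if "i \<ge> i0" for i
      using close that below[of i] range[of i] by auto
  qed
next
  case False
  with assms(2) have dec: "\<forall>i. f (Suc i) < f i" by blast
  then have "decseq f" by (simp add: decseq_SucI less_imp_le)
  then obtain L where lim: "f \<longlonglongrightarrow> L" and "\<forall>i. L \<le> f i"
    using decseq_convergent[of f 0] range by auto
  then have above: "L < f i" for i using dec le_less_trans by blast
  have "0 \<le> L" using LIMSEQ_le_const[OF lim] range by auto
  have start: "f i < f 0" if "i \<ge> 1" for i
    using decseqD[OF \<open>decseq f\<close> that] dec by (metis One_nat_def order_le_less_trans)
  obtain i0 where close: "\<forall>i\<ge>i0. norm (f i - L) < e / 2"
    using LIMSEQ_D[OF lim, of "e / 2"] \<open>e > 0\<close> by auto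
  show ?thesis
  proof (rule that[of L "min (L + e / 2) (f 0)" "max i0 1"])
    show "0 \<le> L" "min (L + e / 2) (f 0) - L < e" using \<open>0 \<le> L\<close> \<open>e > 0\<close> by auto
    show "L \<le> min (L + e / 2) (f 0)" "min (L + e / 2) (f 0) \<le> 1"
      using above[of 0] range[of 0] \<open>e > 0\<close> by auto
    show "L \<le> f i \<and> f i < min (L + e / 2) (f 0)" if "i \<ge> max i0 1" for i
      using close that above[of i] start[of i] by auto
  qed
qed

theorem proposition1:
  fixes a :: "nat \<Rightarrow> real" and N :: nat
  assumes "inj a"
    and "N > 0"
    and "has_N_monotone_subperm N a"
  shows "\<not> equidistributed_perm a"
proof
  assume "equidistributed_perm a"
  then obtain b where order: "same_order a b" and eq: "equidistributed_seq b"
    unfolding equidistributed_perm_def by blast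
  obtain n where "N_growing N a n \<or> N_decreasing N a n"
    using assms(3) unfolding has_N_monotone_subperm_def by blast
  then have "strict_mono n" and gaps: "\<And>i. n (Suc i) - n i \<le> N"
    and monotone: "(\<forall>i. b (n i) < b (n (Suc i))) \<or> (\<forall>i. b (n (Suc i)) < b (n i))"
    using order unfolding N_growing_def N_decreasing_def same_order_def by blast+
  have "\<And>i. b (n i) \<in> {0..1}" using eq unfolding equidistributed_seq_def by blast
  then obtain t1 t2 i0 where t: "0 \<le> t1" "t1 \<le> t2" "t2 \<le> 1" "t2 - t1 < 1 / real N"
    and tail: "\<And>i. i \<ge> i0 \<Longrightarrow> t1 \<le> b (n i) \<and> b (n i) < t2"
    by (rule strictly_monotone_eventually_in_short_interval[OF _ monotone]) (use assms(2) in auto)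
  have "strict_mono (\<lambda>i. n (i + i0))"
    using \<open>strict_mono n\<close> by (simp add: strict_mono_def)
  then have "1 / real N \<le> t2 - t1"
    using density_ge_inverse_gap[of "\<lambda>i. n (i + i0)" N "\<lambda>i. t1 \<le> b i \<and> b i < t2"]
      gaps[of "i + i0" for i] assms(2) tail equidistributed_interval_frequency[OF eq t(1-3)]
    by simp
  with t show False by simp
qed

end
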